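(* Let $\rho=|\psi\rangle\langle\psi|$ be an $n$-qubit pure state and $S\subseteq[n]$ non-empty with $s=|S|$. Let $\{|\tilde\phi_j\rangle\langle\tilde\phi_j|\}_{j=1}^4$ be a single-qubit SIC-POVM, and for $\mathbf{q}\in\{1,2,3,4\}^s$ let $|\tilde\Phi_{\mathbf{q}}\rangle\langle\tilde\Phi_{\mathbf{q}}|=\bigotimes_{i\in S}|\tilde\phi_{q_i}\rangle\langle\tilde\phi_{q_i}|$ (identity on qubits outside $S$), so that measuring the local SIC-POVM on the qubits of $S$ yields outcome $\mathbf{q}$ with probability $P(\mathbf{q})=\operatorname{tr}(\rho|\tilde\Phi_{\mathbf{q}}\rangle\langle\tilde\Phi_{\mathbf{q}}|)$. Then $$\mathcal{C}_{|\psi\rangle}(S)=1-3^s\sum_{\mathbf{q}\in\{1,2,3,4\}^s}P(\mathbf{q})^2.$$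
   Context: $[n]=\{1,\dots,n\}$ labels the qubits. For an $n$-qubit pure state $|\psi\rangle$ and a non-empty $S\subseteq[n]$ with $s=|S|$, the concentratable entanglement is $\mathcal{C}_{|\psi\rangle}(S)=1-\frac{1}{2^s}\sum_{\alpha\subseteq S}\operatorname{tr}(\rho_\alpha^2)$, where $\rho_\alpha$ is the reduced state of $|\psi\rangle\langle\psi|$ on the qubits in $\alpha$, and $\operatorname{tr}(\rho_\emptyset^2):=1$. A single-qubit SIC-POVM consists of $|\tilde\phi_j\rangle=\frac{1}{\sqrt2}|\phi_j\rangle$, $j=1,\dots,4$, where $|\phi_j\rangle$ are unit vectors in $\mathbb{C}^2$ with $|\langle\phi_j|\phi_k\rangle|^2=1/3$ for $j\ne k$, so that $\sum_j|\tilde\phi_j\rangle\langle\tilde\phi_j|=\mathbb{I}$; e.g. $|\phi_1\rangle=|0\rangle$, $|\phi_{k}\rangle=\frac{1}{\sqrt3}|0\rangle+\sqrt{\frac23}e^{i2\pi(k-2)/3}|1\rangle$ for $k=2,3,4$. *)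

theory Defs
  imports "HOL-Analysis.Analysis" "HOL-Library.FuncSet"
begin

text \<open>A computational basis state of n qubits is
  encoded by the set x \<subseteq> {1..n} of qubits that are in state |1>; so qubit i of x
  is the bit (i \<in> x). A (pure) n-qubit state is psi :: nat set => complex, with
  amplitudes psi x for x \<in> Pow {1..n}. A single-qubit vector is a function bool => complex
  (False ~ |0>, True ~ |1>).\<close>

definition qubits :: "nat \<Rightarrow> nat set" where
  "qubits n = {1..n}"

definition normalized :: "nat \<Rightarrow> (nat set \<Rightarrow> complex) \<Rightarrow> bool" where
  "normalized n psi \<longleftrightarrow> (\<Sum>x\<in>Pow (qubits n). (cmod (psi x))\<^sup>2) = 1"

definition dens :: "(nat set \<Rightarrow> complex) \<Rightarrow> nat set \<Rightarrow> nat set \<Rightarrow> complex" where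
  "dens psi x y = psi x * cnj (psi y)"

text \<open>Reduced state on the qubits in alpha (partial trace over the complement); its
  entries are indexed by a, b \<subseteq> alpha.\<close>
definition reduced :: "nat \<Rightarrow> (nat set \<Rightarrow> complex) \<Rightarrow> nat set \<Rightarrow> nat set \<Rightarrow> nat set \<Rightarrow> complex" where
  "reduced n psi \<alpha> a b = (\<Sum>c\<in>Pow (qubits n - \<alpha>). dens psi (a \<union> c) (b \<union> c))"

definition purity :: "nat \<Rightarrow> (nat set \<Rightarrow> complex) \<Rightarrow> nat set \<Rightarrow> complex" where
  "purity n psi \<alpha> = (if \<alpha> = {} then 1 else
     (\<Sum>a\<in>Pow \<alpha>. \<Sum>b\<in>Pow \<alpha>. reduced n psi \<alpha> a b * reduced n psi \<alpha> b a))"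

definition conc_ent :: "nat \<Rightarrow> (nat set \<Rightarrow> complex) \<Rightarrow> nat set \<Rightarrow> complex" where
  "conc_ent n psi S = 1 - (1 / 2 ^ card S) * (\<Sum>\<alpha>\<in>Pow S. purity n psi \<alpha>)"

definition qubit_sic :: "(nat \<Rightarrow> bool \<Rightarrow> complex) \<Rightarrow> bool" where
  "qubit_sic \<phi> \<longleftrightarrow>
     (\<forall>j\<in>{1..4}. (\<Sum>b\<in>UNIV. (cmod (\<phi> j b))\<^sup>2) = 1) \<and>
     (\<forall>j\<in>{1..4}. \<forall>k\<in>{1..4}. j \<noteq> k \<longrightarrow>
        (cmod (\<Sum>b\<in>UNIV. cnj (\<phi> j b) * \<phi> k b))\<^sup>2 = 1/3)"

text \<open>Matrix entries of |Phi~_q><Phi~_q| = tensor over i in S of |phi~_{q i}><phi~_{q i}|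
  (with phi~ = phi / sqrt 2), tensored with the identity on qubits outside S.\<close>
definition sic_proj :: "(nat \<Rightarrow> bool \<Rightarrow> complex) \<Rightarrow> nat set \<Rightarrow> (nat \<Rightarrow> nat) \<Rightarrow> nat set \<Rightarrow> nat set \<Rightarrow> complex" where
  "sic_proj \<phi> S q x y =
     (\<Prod>i\<in>S. (\<phi> (q i) (i \<in> x) / sqrt 2) * cnj (\<phi> (q i) (i \<in> y) / sqrt 2)) *
     (if x - S = y - S then 1 else 0)"

definition sic_prob :: "nat \<Rightarrow> (nat set \<Rightarrow> complex) \<Rightarrow> (nat \<Rightarrow> bool \<Rightarrow> complex) \<Rightarrow> nat set \<Rightarrow> (nat \<Rightarrow> nat) \<Rightarrow> complex" where
  "sic_prob n psi \<phi> S q =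
     (\<Sum>x\<in>Pow (qubits n). \<Sum>y\<in>Pow (qubits n). dens psi x y * sic_proj \<phi> S q y x)"

end

theory Submission
  imports Defs
begin

(* A qubit SIC is a 2-design: the Bloch vectors of its four states are the vertices of a regular
   tetrahedron, hence a tight frame of R^3, and this gives
     sum_j |phi_j><phi_j| (x) |phi_j><phi_j| = 2/3 (I + SWAP).
   Tensoring over the qubits of S,
     sum_q P(q)^2 = tr((rho (x) rho) (x)_{i in S} (I + SWAP_i)/6)
                  = 6^-s sum_{alpha subseteq S} tr((rho (x) rho) SWAP_alpha),
   and tr((rho (x) rho) SWAP_alpha) = tr(rho_alpha^2).  Finally 3^s 6^-s = 2^-s. *)

lemma sum_Pow_Un:
  assumes "A \<inter> B = {}"
  shows "(\<Sum>x\<in>Pow (A \<union> B). g x) = (\<Sum>a\<in>Pow A. \<Sum>c\<in>Pow B. g (a \<union> c))"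
proof -
  have "bij_betw (\<lambda>(a, c). a \<union> c) (Pow A \<times> Pow B) (Pow (A \<union> B))"
    by (rule bij_betw_byWitness[where f' = "\<lambda>x. (x \<inter> A, x \<inter> B)"]) (use assms in auto)
  then show ?thesis
    by (simp add: sum.reindex_bij_betw[symmetric] sum.cartesian_product case_prod_unfold)
qed

lemma prod_of_bool:
  "finite A \<Longrightarrow> (\<Prod>i\<in>A. of_bool (P i)) = (of_bool (\<forall>i\<in>A. P i) :: 'a :: comm_semiring_1)"
  by (induction A rule: finite_induct) auto

lemma sum_delta_pair:
  assumes "finite A" "s \<in> A" "t \<in> A"
  shows "(\<Sum>y\<in>A. \<Sum>y'\<in>A. of_bool (y = s \<and> y' = t) * g y y') = (g s t :: 'a :: comm_semiring_1)"
proof -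
  have "(\<Sum>y'\<in>A. of_bool (y = s \<and> y' = t) * g y y') = (if y = s then g y t else 0)" for y
    using assms by (cases "y = s") (simp_all add: sum.delta)
  then show ?thesis
    using assms by (simp add: sum.delta)
qed

lemma sum_swap_nested:
  "(\<Sum>q\<in>Q. \<Sum>x\<in>A. \<Sum>x'\<in>B. \<Sum>y\<in>C. \<Sum>y'\<in>D. f q x x' y y') =
   (\<Sum>x\<in>A. \<Sum>x'\<in>B. \<Sum>y\<in>C. \<Sum>y'\<in>D. \<Sum>q\<in>Q. f q x x' y y')"
  by (rule trans[OF sum.swap], rule sum.cong[OF refl])+ (rule refl)

definition bloch_x :: "(bool \<Rightarrow> complex) \<Rightarrow> real" where
  "bloch_x v = 2 * Re (v False * cnj (v True))"

definition bloch_y :: "(bool \<Rightarrow> complex) \<Rightarrow> real" where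
  "bloch_y v = 2 * Im (v True * cnj (v False))"

definition bloch_z :: "(bool \<Rightarrow> complex) \<Rightarrow> real" where
  "bloch_z v = (cmod (v False))\<^sup>2 - (cmod (v True))\<^sup>2"

(* The density matrix (I + x sigma_x + y sigma_y + z sigma_z)/2, rows and columns indexed by
   False = |0> and True = |1>. *)
definition bloch_matrix :: "real \<Rightarrow> real \<Rightarrow> real \<Rightarrow> bool \<Rightarrow> bool \<Rightarrow> complex" where
  "bloch_matrix x y z a b =
     (if a then (if b then Complex ((1 - z) / 2) 0 else Complex (x / 2) (y / 2))
      else (if b then Complex (x / 2) (- y / 2) else Complex ((1 + z) / 2) 0))"

lemma bloch_norm:
  "(bloch_x v)\<^sup>2 + (bloch_y v)\<^sup>2 + (bloch_z v)\<^sup>2 = ((cmod (v False))\<^sup>2 + (cmod (v True))\<^sup>2)\<^sup>2"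
  unfolding bloch_x_def bloch_y_def bloch_z_def cmod_power2
  by (simp add: algebra_simps power2_eq_square)

lemma overlap_bloch:
  "(cmod (cnj (v False) * w False + cnj (v True) * w True))\<^sup>2 =
     (((cmod (v False))\<^sup>2 + (cmod (v True))\<^sup>2) * ((cmod (w False))\<^sup>2 + (cmod (w True))\<^sup>2)
      + bloch_x v * bloch_x w + bloch_y v * bloch_y w + bloch_z v * bloch_z w) / 2"
  unfolding bloch_x_def bloch_y_def bloch_z_def cmod_power2
  by (simp add: algebra_simps power2_eq_square)

lemma outer_product_bloch:
  assumes "(cmod (v False))\<^sup>2 + (cmod (v True))\<^sup>2 = 1"
  shows "v a * cnj (v b) = bloch_matrix (bloch_x v) (bloch_y v) (bloch_z v) a b"
  using assms unfolding bloch_matrix_def bloch_x_def bloch_y_def bloch_z_def cmod_power2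
  by (cases a; cases b) (simp_all add: complex_eq_iff power2_eq_square algebra_simps)

lemma tetrahedron_tight_frame:
  fixes x1 x2 x3 x4 y1 y2 y3 y4 z1 z2 z3 z4 :: real
  assumes n1: "x1\<^sup>2 + y1\<^sup>2 + z1\<^sup>2 = 1" and n2: "x2\<^sup>2 + y2\<^sup>2 + z2\<^sup>2 = 1"
    and n3: "x3\<^sup>2 + y3\<^sup>2 + z3\<^sup>2 = 1" and n4: "x4\<^sup>2 + y4\<^sup>2 + z4\<^sup>2 = 1"
    and d12: "x1 * x2 + y1 * y2 + z1 * z2 = -1/3" and d13: "x1 * x3 + y1 * y3 + z1 * z3 = -1/3"
    and d14: "x1 * x4 + y1 * y4 + z1 * z4 = -1/3" and d23: "x2 * x3 + y2 * y3 + z2 * z3 = -1/3"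
    and d24: "x2 * x4 + y2 * y4 + z2 * z4 = -1/3" and d34: "x3 * x4 + y3 * y4 + z3 * z4 = -1/3"
  shows "x1 + x2 + x3 + x4 = 0" "y1 + y2 + y3 + y4 = 0" "z1 + z2 + z3 + z4 = 0"
    and "x1\<^sup>2 + x2\<^sup>2 + x3\<^sup>2 + x4\<^sup>2 = 4/3" "y1\<^sup>2 + y2\<^sup>2 + y3\<^sup>2 + y4\<^sup>2 = 4/3"
      "z1\<^sup>2 + z2\<^sup>2 + z3\<^sup>2 + z4\<^sup>2 = 4/3"
    and "x1 * y1 + x2 * y2 + x3 * y3 + x4 * y4 = 0" "x1 * z1 + x2 * z2 + x3 * z3 + x4 * z4 = 0"
      "y1 * z1 + y2 * z2 + y3 * z3 + y4 * z4 = 0"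
proof -
  define sx where "sx = x1 + x2 + x3 + x4"
  define sy where "sy = y1 + y2 + y3 + y4"
  define sz where "sz = z1 + z2 + z3 + z4"
  have "sx\<^sup>2 + sy\<^sup>2 + sz\<^sup>2 =
      (x1\<^sup>2 + y1\<^sup>2 + z1\<^sup>2) + (x2\<^sup>2 + y2\<^sup>2 + z2\<^sup>2) + (x3\<^sup>2 + y3\<^sup>2 + z3\<^sup>2) + (x4\<^sup>2 + y4\<^sup>2 + z4\<^sup>2)
      + 2 * ((x1 * x2 + y1 * y2 + z1 * z2) + (x1 * x3 + y1 * y3 + z1 * z3) + (x1 * x4 + y1 * y4 + z1 * z4)
        + (x2 * x3 + y2 * y3 + z2 * z3) + (x2 * x4 + y2 * y4 + z2 * z4) + (x3 * x4 + y3 * y4 + z3 * z4))"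
    unfolding sx_def sy_def sz_def by algebra
  also have "\<dots> = 0" using n1 n2 n3 n4 d12 d13 d14 d23 d24 d34 by simp
  finally have "sx\<^sup>2 + sy\<^sup>2 + sz\<^sup>2 = 0" .
  then have "sx = 0" "sy = 0" "sz = 0"
    by (smt (verit) zero_le_power2 power_eq_0_iff)+
  then show "x1 + x2 + x3 + x4 = 0" "y1 + y2 + y3 + y4 = 0" "z1 + z2 + z3 + z4 = 0"
    unfolding sx_def sy_def sz_def .
  define fxx where "fxx = x1\<^sup>2 + x2\<^sup>2 + x3\<^sup>2 + x4\<^sup>2"
  define fyy where "fyy = y1\<^sup>2 + y2\<^sup>2 + y3\<^sup>2 + y4\<^sup>2"
  define fzz where "fzz = z1\<^sup>2 + z2\<^sup>2 + z3\<^sup>2 + z4\<^sup>2"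
  define fxy where "fxy = x1 * y1 + x2 * y2 + x3 * y3 + x4 * y4"
  define fxz where "fxz = x1 * z1 + x2 * z2 + x3 * z3 + x4 * z4"
  define fyz where "fyz = y1 * z1 + y2 * z2 + y3 * z3 + y4 * z4"
  \<comment> \<open>The frame operator F has trace 4 and Hilbert-Schmidt norm 16/3, so F - 4/3 I has norm 0.\<close>
  have trace: "fxx + fyy + fzz = 4"
    unfolding fxx_def fyy_def fzz_def using n1 n2 n3 n4 by linarith
  have "fxx\<^sup>2 + fyy\<^sup>2 + fzz\<^sup>2 + 2 * fxy\<^sup>2 + 2 * fxz\<^sup>2 + 2 * fyz\<^sup>2 =
      (x1\<^sup>2 + y1\<^sup>2 + z1\<^sup>2)\<^sup>2 + (x2\<^sup>2 + y2\<^sup>2 + z2\<^sup>2)\<^sup>2 + (x3\<^sup>2 + y3\<^sup>2 + z3\<^sup>2)\<^sup>2 + (x4\<^sup>2 + y4\<^sup>2 + z4\<^sup>2)\<^sup>2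
      + 2 * ((x1 * x2 + y1 * y2 + z1 * z2)\<^sup>2 + (x1 * x3 + y1 * y3 + z1 * z3)\<^sup>2
        + (x1 * x4 + y1 * y4 + z1 * z4)\<^sup>2 + (x2 * x3 + y2 * y3 + z2 * z3)\<^sup>2
        + (x2 * x4 + y2 * y4 + z2 * z4)\<^sup>2 + (x3 * x4 + y3 * y4 + z3 * z4)\<^sup>2)"
    unfolding fxx_def fyy_def fzz_def fxy_def fxz_def fyz_def by algebra
  also have "\<dots> = 16/3"
    using n1 n2 n3 n4 d12 d13 d14 d23 d24 d34 by (simp add: power2_eq_square)
  finally have hs_norm: "fxx\<^sup>2 + fyy\<^sup>2 + fzz\<^sup>2 + 2 * fxy\<^sup>2 + 2 * fxz\<^sup>2 + 2 * fyz\<^sup>2 = 16/3" .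
  have "(fxx - 4/3)\<^sup>2 + (fyy - 4/3)\<^sup>2 + (fzz - 4/3)\<^sup>2 + 2 * fxy\<^sup>2 + 2 * fxz\<^sup>2 + 2 * fyz\<^sup>2
      = (fxx\<^sup>2 + fyy\<^sup>2 + fzz\<^sup>2 + 2 * fxy\<^sup>2 + 2 * fxz\<^sup>2 + 2 * fyz\<^sup>2) - 8/3 * (fxx + fyy + fzz) + 16/3"
    by algebra
  also have "\<dots> = 0" using hs_norm trace by simp
  finally have "fxx = 4/3" "fyy = 4/3" "fzz = 4/3" "fxy = 0" "fxz = 0" "fyz = 0"
    by (smt (verit) zero_le_power2 power_eq_0_iff)+
  then show "x1\<^sup>2 + x2\<^sup>2 + x3\<^sup>2 + x4\<^sup>2 = 4/3" "y1\<^sup>2 + y2\<^sup>2 + y3\<^sup>2 + y4\<^sup>2 = 4/3"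
      "z1\<^sup>2 + z2\<^sup>2 + z3\<^sup>2 + z4\<^sup>2 = 4/3"
    and "x1 * y1 + x2 * y2 + x3 * y3 + x4 * y4 = 0" "x1 * z1 + x2 * z2 + x3 * z3 + x4 * z4 = 0"
      "y1 * z1 + y2 * z2 + y3 * z3 + y4 * z4 = 0"
    unfolding fxx_def fyy_def fzz_def fxy_def fxz_def fyz_def .
qed

lemma bloch_two_design:
  fixes X Y Z :: "nat \<Rightarrow> real"
  assumes "X 1 + X 2 + X 3 + X 4 = 0" "Y 1 + Y 2 + Y 3 + Y 4 = 0" "Z 1 + Z 2 + Z 3 + Z 4 = 0"
    and "(X 1)\<^sup>2 + (X 2)\<^sup>2 + (X 3)\<^sup>2 + (X 4)\<^sup>2 = 4/3" "(Y 1)\<^sup>2 + (Y 2)\<^sup>2 + (Y 3)\<^sup>2 + (Y 4)\<^sup>2 = 4/3"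
      "(Z 1)\<^sup>2 + (Z 2)\<^sup>2 + (Z 3)\<^sup>2 + (Z 4)\<^sup>2 = 4/3"
    and "X 1 * Y 1 + X 2 * Y 2 + X 3 * Y 3 + X 4 * Y 4 = 0"
      "X 1 * Z 1 + X 2 * Z 2 + X 3 * Z 3 + X 4 * Z 4 = 0"
      "Y 1 * Z 1 + Y 2 * Z 2 + Y 3 * Z 3 + Y 4 * Z 4 = 0"
  shows "(\<Sum>j\<in>{1..4}. bloch_matrix (X j) (Y j) (Z j) a b * bloch_matrix (X j) (Y j) (Z j) c d) =
    2/3 * (of_bool (a = b \<and> c = d) + of_bool (a = d \<and> c = b))"
proof -
  have four: "{1..4::nat} = {1, 2, 3, 4}" by auto
  show ?thesis
    unfolding four bloch_matrix_def
    by (cases a; cases b; cases c; cases d; simp add: complex_eq_iff)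
      (use assms in \<open>simp_all add: field_simps power2_eq_square\<close>)
qed

lemma qubit_sic_two_design:
  assumes "qubit_sic \<phi>"
  shows "(\<Sum>j\<in>{1..4}. \<phi> j a * cnj (\<phi> j b) * (\<phi> j c * cnj (\<phi> j d))) =
    2/3 * (of_bool (a = b \<and> c = d) + of_bool (a = d \<and> c = b))"
proof -
  have unit: "(cmod (\<phi> j False))\<^sup>2 + (cmod (\<phi> j True))\<^sup>2 = 1" if "j \<in> {1..4}" for j
    using assms that unfolding qubit_sic_def by (auto simp: UNIV_bool add.commute)
  have overlap: "(cmod (cnj (\<phi> j False) * \<phi> k False + cnj (\<phi> j True) * \<phi> k True))\<^sup>2 = 1/3"
    if "j \<in> {1..4}" "k \<in> {1..4}" "j \<noteq> k" for j k
    using assms that unfolding qubit_sic_def by (auto simp: UNIV_bool add.commute)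
  define X where "X j = bloch_x (\<phi> j)" for j
  define Y where "Y j = bloch_y (\<phi> j)" for j
  define Z where "Z j = bloch_z (\<phi> j)" for j
  have norm: "(X j)\<^sup>2 + (Y j)\<^sup>2 + (Z j)\<^sup>2 = 1" if "j \<in> {1..4}" for j
    using bloch_norm[of "\<phi> j"] unit[OF that] unfolding X_def Y_def Z_def by simp
  have inner: "X j * X k + Y j * Y k + Z j * Z k = -1/3"
    if "j \<in> {1..4}" "k \<in> {1..4}" "j \<noteq> k" for j k
    using overlap_bloch[of "\<phi> j" "\<phi> k"] unit[OF that(1)] unit[OF that(2)] overlap[OF that]
    unfolding X_def Y_def Z_def by simp
  have "(\<Sum>j\<in>{1..4}. \<phi> j a * cnj (\<phi> j b) * (\<phi> j c * cnj (\<phi> j d))) =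
      (\<Sum>j\<in>{1..4}. bloch_matrix (X j) (Y j) (Z j) a b * bloch_matrix (X j) (Y j) (Z j) c d)"
    using unit by (intro sum.cong refl) (simp add: outer_product_bloch X_def Y_def Z_def)
  also have "\<dots> = 2/3 * (of_bool (a = b \<and> c = d) + of_bool (a = d \<and> c = b))"
    by (rule bloch_two_design[OF tetrahedron_tight_frame[OF norm[of 1] norm[of 2] norm[of 3] norm[of 4]
      inner[of 1 2] inner[of 1 3] inner[of 1 4] inner[of 2 3] inner[of 2 4] inner[of 3 4]]]) simp_all
  finally show ?thesis .
qed

lemma qubit_sic_povm_two_design:
  assumes "qubit_sic \<phi>"
  shows "(\<Sum>j\<in>{1..4}. \<phi> j a / sqrt 2 * cnj (\<phi> j b / sqrt 2) * (\<phi> j c / sqrt 2 * cnj (\<phi> j d / sqrt 2))) =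
    1/6 * (of_bool (a = b \<and> c = d) + of_bool (a = d \<and> c = b))"
proof -
  have "complex_of_real (sqrt 2) * complex_of_real (sqrt 2) = 2"
    by (simp flip: of_real_mult)
  then have half: "z / sqrt 2 * cnj (w / sqrt 2) = z * cnj w / 2" for z w :: complex
    by (simp add: field_simps)
  have "(\<Sum>j\<in>{1..4}. \<phi> j a / sqrt 2 * cnj (\<phi> j b / sqrt 2) * (\<phi> j c / sqrt 2 * cnj (\<phi> j d / sqrt 2))) =
      (\<Sum>j\<in>{1..4}. \<phi> j a * cnj (\<phi> j b) * (\<phi> j c * cnj (\<phi> j d))) / 4"
    unfolding half sum_divide_distrib by (intro sum.cong refl) simp
  also have "\<dots> = 1/6 * (of_bool (a = b \<and> c = d) + of_bool (a = d \<and> c = b))"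
    unfolding qubit_sic_two_design[OF assms] by simp
  finally show ?thesis .
qed

(* On two copies of the register, (x, x') |-> (override_set x x' alpha, override_set x' x alpha)
   swaps the qubits in alpha, so swap_trace N psi alpha is tr((rho (x) rho) SWAP_alpha). *)
definition override_set :: "'a set \<Rightarrow> 'a set \<Rightarrow> 'a set \<Rightarrow> 'a set" where
  "override_set x x' \<alpha> = x - \<alpha> \<union> x' \<inter> \<alpha>"

lemma eq_override_set_iff:
  assumes "\<alpha> \<subseteq> S"
  shows "y = override_set x x' \<alpha> \<longleftrightarrow>
    y - S = x - S \<and> (\<forall>i\<in>\<alpha>. i \<in> y \<longleftrightarrow> i \<in> x') \<and> (\<forall>i\<in>S - \<alpha>. i \<in> y \<longleftrightarrow> i \<in> x)"
  using assms unfolding override_set_def by auto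

lemma of_bool_override_set_pair:
  assumes "finite S" and "\<alpha> \<subseteq> S"
  shows "of_bool (y - S = x - S \<and> y' - S = x' - S) *
      ((\<Prod>i\<in>\<alpha>. of_bool ((i \<in> y \<longleftrightarrow> i \<in> x') \<and> (i \<in> y' \<longleftrightarrow> i \<in> x))) *
       (\<Prod>i\<in>S - \<alpha>. of_bool ((i \<in> y \<longleftrightarrow> i \<in> x) \<and> (i \<in> y' \<longleftrightarrow> i \<in> x')))) =
    (of_bool (y = override_set x x' \<alpha> \<and> y' = override_set x' x \<alpha>) :: 'a :: comm_semiring_1)"
proof -
  have "finite \<alpha>" "finite (S - \<alpha>)"
    using assms finite_subset by auto
  moreover have "(y - S = x - S \<and> y' - S = x' - S) \<and>
      (\<forall>i\<in>\<alpha>. (i \<in> y \<longleftrightarrow> i \<in> x') \<and> (i \<in> y' \<longleftrightarrow> i \<in> x)) \<and>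
      (\<forall>i\<in>S - \<alpha>. (i \<in> y \<longleftrightarrow> i \<in> x) \<and> (i \<in> y' \<longleftrightarrow> i \<in> x')) \<longleftrightarrow>
      y = override_set x x' \<alpha> \<and> y' = override_set x' x \<alpha>"
    unfolding eq_override_set_iff[OF assms(2)] ball_conj_distrib by blast
  ultimately show ?thesis
    by (simp only: prod_of_bool of_bool_conj[symmetric])
qed

definition swap_trace :: "nat set \<Rightarrow> (nat set \<Rightarrow> complex) \<Rightarrow> nat set \<Rightarrow> complex" where
  "swap_trace N psi \<alpha> = (\<Sum>x\<in>Pow N. \<Sum>x'\<in>Pow N.
     dens psi x (override_set x x' \<alpha>) * dens psi x' (override_set x' x \<alpha>))"

lemma purity_eq_trace_reduced_square:
  assumes "normalized n psi"
  shows "purity n psi \<alpha> = (\<Sum>a\<in>Pow \<alpha>. \<Sum>b\<in>Pow \<alpha>. reduced n psi \<alpha> a b * reduced n psi \<alpha> b a)"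
proof (cases "\<alpha> = {}")
  case True
  have "(\<Sum>x\<in>Pow (qubits n). dens psi x x) = of_real (\<Sum>x\<in>Pow (qubits n). (cmod (psi x))\<^sup>2)"
    unfolding dens_def by (simp only: complex_norm_square of_real_sum)
  then have "reduced n psi {} {} {} = 1"
    using assms unfolding reduced_def normalized_def by simp
  then show ?thesis
    using True unfolding purity_def by simp
qed (simp add: purity_def)

lemma trace_reduced_square_eq_swap_trace:
  assumes "\<alpha> \<subseteq> qubits n"
  shows "(\<Sum>a\<in>Pow \<alpha>. \<Sum>b\<in>Pow \<alpha>. reduced n psi \<alpha> a b * reduced n psi \<alpha> b a) =
    swap_trace (qubits n) psi \<alpha>"
proof -
  define \<beta> where "\<beta> = qubits n - \<alpha>"
  have split: "qubits n = \<alpha> \<union> \<beta>" and disj: "\<alpha> \<inter> \<beta> = {}"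
    using assms unfolding \<beta>_def by auto
  define F where "F x x' = dens psi x (override_set x x' \<alpha>) * dens psi x' (override_set x' x \<alpha>)" for x x'
  have "swap_trace (qubits n) psi \<alpha> =
      (\<Sum>a\<in>Pow \<alpha>. \<Sum>c\<in>Pow \<beta>. \<Sum>b\<in>Pow \<alpha>. \<Sum>c'\<in>Pow \<beta>. F (a \<union> c) (b \<union> c'))"
    unfolding swap_trace_def split F_def by (simp add: sum_Pow_Un[OF disj])
  also have "\<dots> = (\<Sum>a\<in>Pow \<alpha>. \<Sum>b\<in>Pow \<alpha>. \<Sum>c\<in>Pow \<beta>. \<Sum>c'\<in>Pow \<beta>. F (a \<union> c) (b \<union> c'))"
    by (intro sum.cong refl sum.swap)
  also have "\<dots> = (\<Sum>a\<in>Pow \<alpha>. \<Sum>b\<in>Pow \<alpha>. reduced n psi \<alpha> a b * reduced n psi \<alpha> b a)"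
  proof (intro sum.cong refl)
    fix a b assume "a \<in> Pow \<alpha>" "b \<in> Pow \<alpha>"
    have "F (a \<union> c) (b \<union> c') = dens psi (a \<union> c) (b \<union> c) * dens psi (b \<union> c') (a \<union> c')"
      if "c \<in> Pow \<beta>" "c' \<in> Pow \<beta>" for c c'
    proof -
      have "override_set (a \<union> c) (b \<union> c') \<alpha> = b \<union> c" "override_set (b \<union> c') (a \<union> c) \<alpha> = a \<union> c'"
        using \<open>a \<in> Pow \<alpha>\<close> \<open>b \<in> Pow \<alpha>\<close> that disj unfolding override_set_def by auto
      then show ?thesis
        unfolding F_def by simp
    qed
    then show "(\<Sum>c\<in>Pow \<beta>. \<Sum>c'\<in>Pow \<beta>. F (a \<union> c) (b \<union> c')) =
        reduced n psi \<alpha> a b * reduced n psi \<alpha> b a"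
      unfolding reduced_def \<beta>_def[symmetric] sum_product by simp
  qed
  finally show ?thesis ..
qed

lemma sum_sic_proj_product:
  assumes "qubit_sic \<phi>" and "finite S"
  shows "(\<Sum>q\<in>PiE S (\<lambda>_. {1..4}). sic_proj \<phi> S q y x * sic_proj \<phi> S q y' x') =
    (1/6) ^ card S * (\<Sum>\<alpha>\<in>Pow S. of_bool (y = override_set x x' \<alpha> \<and> y' = override_set x' x \<alpha>))"
proof -
  define f where "f i j = \<phi> j (i \<in> y) / sqrt 2 * cnj (\<phi> j (i \<in> x) / sqrt 2) *
    (\<phi> j (i \<in> y') / sqrt 2 * cnj (\<phi> j (i \<in> x') / sqrt 2))" for i j
  define swap where "swap i \<longleftrightarrow> (i \<in> y \<longleftrightarrow> i \<in> x') \<and> (i \<in> y' \<longleftrightarrow> i \<in> x)" for i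
  define keep where "keep i \<longleftrightarrow> (i \<in> y \<longleftrightarrow> i \<in> x) \<and> (i \<in> y' \<longleftrightarrow> i \<in> x')" for i
  define outside where "outside \<longleftrightarrow> y - S = x - S \<and> y' - S = x' - S"
  have "sic_proj \<phi> S q y x * sic_proj \<phi> S q y' x' = of_bool outside * (\<Prod>i\<in>S. f i (q i))" for q
    unfolding sic_proj_def f_def outside_def prod.distrib by simp
  then have "(\<Sum>q\<in>PiE S (\<lambda>_. {1..4}). sic_proj \<phi> S q y x * sic_proj \<phi> S q y' x') =
      of_bool outside * (\<Sum>q\<in>PiE S (\<lambda>_. {1..4}). \<Prod>i\<in>S. f i (q i))"
    by (simp add: sum_distrib_left)
  also have "\<dots> = of_bool outside * (\<Prod>i\<in>S. \<Sum>j\<in>{1..4}. f i j)"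
    by (simp add: prod_sum_PiE assms(2))
  also have "(\<Prod>i\<in>S. \<Sum>j\<in>{1..4}. f i j) = (\<Prod>i\<in>S. 1/6 * (of_bool (swap i) + of_bool (keep i)))"
    unfolding f_def qubit_sic_povm_two_design[OF assms(1)] swap_def keep_def by (intro prod.cong refl) auto
  also have "\<dots> = (1/6) ^ card S * (\<Sum>\<alpha>\<in>Pow S. (\<Prod>i\<in>\<alpha>. of_bool (swap i)) * (\<Prod>i\<in>S - \<alpha>. of_bool (keep i)))"
    by (simp only: prod.distrib prod_constant prod_add[OF assms(2)])
  also have "of_bool outside * \<dots> = (1/6) ^ card S *
      (\<Sum>\<alpha>\<in>Pow S. of_bool outside * ((\<Prod>i\<in>\<alpha>. of_bool (swap i)) * (\<Prod>i\<in>S - \<alpha>. of_bool (keep i))))"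
    by (simp only: sum_distrib_left mult.left_commute)
  also have "\<dots> =
      (1/6) ^ card S * (\<Sum>\<alpha>\<in>Pow S. of_bool (y = override_set x x' \<alpha> \<and> y' = override_set x' x \<alpha>))"
    unfolding outside_def swap_def keep_def
    by (rule arg_cong[where f = "\<lambda>z. _ * z"], rule sum.cong[OF refl],
        rule of_bool_override_set_pair[OF assms(2)]) auto
  finally show ?thesis .
qed

lemma sum_sic_prob_squared:
  assumes "qubit_sic \<phi>" and "S \<subseteq> qubits n"
  shows "(\<Sum>q\<in>PiE S (\<lambda>_. {1..4}). (sic_prob n psi \<phi> S q)\<^sup>2) =
    (1/6) ^ card S * (\<Sum>\<alpha>\<in>Pow S. swap_trace (qubits n) psi \<alpha>)"
proof -
  define Q where "Q = PiE S (\<lambda>_. {1..4::nat})"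
  define P where "P = Pow (qubits n)"
  have "finite P" "finite S"
    using assms(2) finite_subset unfolding P_def qubits_def by auto
  have "(\<Sum>q\<in>Q. (sic_prob n psi \<phi> S q)\<^sup>2) = (\<Sum>q\<in>Q. \<Sum>x\<in>P. \<Sum>x'\<in>P. \<Sum>y\<in>P. \<Sum>y'\<in>P.
      dens psi x y * dens psi x' y' * (sic_proj \<phi> S q y x * sic_proj \<phi> S q y' x'))"
    unfolding sic_prob_def power2_eq_square sum_product P_def by (simp add: mult_ac)
  also have "\<dots> = (\<Sum>x\<in>P. \<Sum>x'\<in>P. \<Sum>y\<in>P. \<Sum>y'\<in>P.
      dens psi x y * dens psi x' y' * (\<Sum>q\<in>Q. sic_proj \<phi> S q y x * sic_proj \<phi> S q y' x'))"
    by (subst sum_swap_nested) (simp add: sum_distrib_left)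
  also have "\<dots> = (\<Sum>x\<in>P. \<Sum>x'\<in>P. \<Sum>y\<in>P. \<Sum>y'\<in>P. \<Sum>\<alpha>\<in>Pow S. (1/6) ^ card S *
      (of_bool (y = override_set x x' \<alpha> \<and> y' = override_set x' x \<alpha>) * (dens psi x y * dens psi x' y')))"
    unfolding Q_def sum_sic_proj_product[OF assms(1) \<open>finite S\<close>] sum_distrib_left sum_distrib_right
    by (simp add: mult_ac)
  also have "\<dots> = (1/6) ^ card S * (\<Sum>\<alpha>\<in>Pow S. \<Sum>x\<in>P. \<Sum>x'\<in>P. \<Sum>y\<in>P. \<Sum>y'\<in>P.
      of_bool (y = override_set x x' \<alpha> \<and> y' = override_set x' x \<alpha>) * (dens psi x y * dens psi x' y'))"
    unfolding sum_distrib_left by (rule sum_swap_nested[symmetric])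
  also have "\<dots> = (1/6) ^ card S * (\<Sum>\<alpha>\<in>Pow S. swap_trace (qubits n) psi \<alpha>)"
  proof -
    have "(\<Sum>y\<in>P. \<Sum>y'\<in>P. of_bool (y = override_set x x' \<alpha> \<and> y' = override_set x' x \<alpha>) *
        (dens psi x y * dens psi x' y')) = dens psi x (override_set x x' \<alpha>) * dens psi x' (override_set x' x \<alpha>)"
      if "x \<in> P" "x' \<in> P" for \<alpha> x x'
    proof (rule sum_delta_pair[OF \<open>finite P\<close>])
      show "override_set x x' \<alpha> \<in> P" "override_set x' x \<alpha> \<in> P"
        using that unfolding P_def override_set_def by auto
    qed
    then show ?thesis
      unfolding swap_trace_def P_def[symmetric] by simp
  qed
  finally show ?thesis
    unfolding Q_def .
qed

theorem corollary1:
  fixes n :: nat and psi :: "nat set \<Rightarrow> complex" and S :: "nat set"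
    and \<phi> :: "nat \<Rightarrow> bool \<Rightarrow> complex"
  assumes "normalized n psi"
    and "S \<subseteq> qubits n" and "S \<noteq> {}"
    and "qubit_sic \<phi>"
  shows "conc_ent n psi S =
           1 - 3 ^ card S * (\<Sum>q\<in>PiE S (\<lambda>_. {1..4}). (sic_prob n psi \<phi> S q)\<^sup>2)"
proof -
  have "purity n psi \<alpha> = swap_trace (qubits n) psi \<alpha>" if "\<alpha> \<in> Pow S" for \<alpha>
    using purity_eq_trace_reduced_square[OF assms(1)] trace_reduced_square_eq_swap_trace that assms(2)
    by auto
  then have "conc_ent n psi S = 1 - 1 / 2 ^ card S * (\<Sum>\<alpha>\<in>Pow S. swap_trace (qubits n) psi \<alpha>)"
    unfolding conc_ent_def by simp
  moreover have "(3::complex) ^ card S * (1/6) ^ card S = 1 / 2 ^ card S"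
    unfolding power_mult_distrib[symmetric] power_one_over[symmetric] by simp
  ultimately show ?thesis
    unfolding sum_sic_prob_squared[OF assms(4,2)] by (simp add: mult.assoc[symmetric])
qed

end
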